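(* Let $G$ be a looped simple graph and $S$ a subtransversal of $W(G)$. Then $S$ is a transverse circuit of $G$ if and only if there is a looped simple graph $H$ locally equivalent to $G$ and an induced isomorphism $\beta: M[IAS(G)]\to M[IAS(H)]$ such that $\beta(S)=\zeta_H(v)$ for some vertex $v\in V(H)$.
   Context: A looped simple graph is a finite graph in which each vertex carries at most one loop and no two distinct vertices are joined by more than one edge. "Adjacent"/"neighbors" refer only to distinct vertices joined by a non-loop edge; $N_G(v)$ is the set of neighbors of $v$ (never containing $v$), and the degree of $v$ is $|N_G(v)|$ (loops are not counted). $A(G)$ is the $V(G)\times V(G)$ matrix over $GF(2)$ with diagonal entry $1$ exactly at looped vertices and off-diagonal entry $1$ exactly for adjacent pairs. $IAS(G)=(I\mid A(G)\mid A(G)+I)$ over $GF(2)$, rows indexed by $V(G)$; for $v\in V(G)$ the $v$-columns of the three blocks are labelled $\phi_G(v),\chi_G(v),\psi_G(v)$. The isotropic matroid $M[IAS(G)]$ is the binary column matroid of $IAS(G)$ on the ground set $W(G)=\{\phi_G(v),\chi_G(v),\psi_G(v):v\in V(G)\}$. The vertex triple of $v$ is $\tau_G(v)=\{\phi_G(v),\chi_G(v),\psi_G(v)\}$. A subtransversal is a subset of $W(G)$ meeting each vertex triple in at most one element; a transversal meets each in exactly one. A transverse matroid of $G$ is the restriction of $M[IAS(G)]$ to a transversal; a transverse circuit of $G$ is a circuit of $M[IAS(G)]$ that is a subtransversal. Local equivalence: $G_\ell^v$ is obtained from $G$ by complementing the loop status of $v$; $G_s^v$ by complementing the adjacency status of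 every pair of distinct neighbors of $v$; $G_{ns}^v$ by doing this and also complementing the loop status of every neighbor of $v$. $H$ is locally equivalent to $G$ if $H$ is obtained from $G$ by a finite sequence of such operations (so $V(H)=V(G)$). Induced isomorphisms: for each such operation producing $G'$ from $G$ there is a matroid isomorphism $M[IAS(G)]\to M[IAS(G')]$ sending $\alpha_G(x)\mapsto\alpha_{G'}(x)$ for all $\alpha\in\{\phi,\chi,\psi\}$, $x\in V(G)$, except: for $G'=G_\ell^v$, $\chi_G(v)\mapsto\psi_{G'}(v)$ and $\psi_G(v)\mapsto\chi_{G'}(v)$; for $G'=G_{ns}^v$ with $v$ unlooped, $\phi_G(v)\mapsto\psi_{G'}(v)$, $\psi_G(v)\mapsto\phi_{G'}(v)$, and with $v$ looped, $\phi_G(v)\mapsto\chi_{G'}(v)$, $\chi_G(v)\mapsto\phi_{G'}(v)$; for $G'=G_s^v$, the same exchange at $v$ as for $G_{ns}^v$ and, in addition, for every $w\in N_G(v)$, $\chi_G(w)\mapsto\psi_{G'}(w)$ and $\psi_G(w)\mapsto\chi_{G'}(w)$. An induced isomorphism $M[IAS(G)]\to M[IAS(H)]$, for $H$ locally equivalent to $G$, is a composition of such isomorphisms along a sequence of operations transforming $G$ into $H$. Neighborhood circuit: $\zeta_G(v)=\{\chi_G(v)\}\cup\{\phi_G(w):w\in N_G(v)\}$ if $v$ is unlooped, and $\zeta_G(v)=\{\psi_G(v)\}\cup\{\phi_G(w):w\in N_G(v)\}$ if $v$ is looped. *)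

theory Defs
  imports Main
begin

record 'a lgraph =
  verts :: "'a set"
  loops :: "'a set"
  adj   :: "'a \<Rightarrow> 'a \<Rightarrow> bool"

definition looped_simple_graph :: "('a, 'b) lgraph_scheme \<Rightarrow> bool" where
  "looped_simple_graph G \<longleftrightarrow> finite (verts G) \<and> loops G \<subseteq> verts G \<and>
     (\<forall>x y. adj G x y \<longrightarrow> x \<in> verts G \<and> y \<in> verts G \<and> x \<noteq> y) \<and>
     (\<forall>x y. adj G x y \<longrightarrow> adj G y x)"

definition nbr :: "'a lgraph \<Rightarrow> 'a \<Rightarrow> 'a set" where
  "nbr G v = {w \<in> verts G. w \<noteq> v \<and> adj G v w}"

datatype 'a elt = Phi 'a | Chi 'a | Psi 'a

fun vtx :: "'a elt \<Rightarrow> 'a" where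
  "vtx (Phi v) = v" | "vtx (Chi v) = v" | "vtx (Psi v) = v"

definition W :: "'a lgraph \<Rightarrow> 'a elt set" where
  "W G = Phi ` verts G \<union> Chi ` verts G \<union> Psi ` verts G"

definition vertex_triple :: "'a lgraph \<Rightarrow> 'a \<Rightarrow> 'a elt set" where
  "vertex_triple G v = {Phi v, Chi v, Psi v}"

(* adjacency matrix A(G) over GF(2), entries as booleans *)
definition Amat :: "'a lgraph \<Rightarrow> 'a \<Rightarrow> 'a \<Rightarrow> bool" where
  "Amat G u w = (if u = w then u \<in> loops G else adj G u w)"

(* column of IAS(G) labelled by x, entry in row u *)
fun col :: "'a lgraph \<Rightarrow> 'a elt \<Rightarrow> 'a \<Rightarrow> bool" where
  "col G (Phi v) u = (u = v)"
| "col G (Chi v) u = Amat G u v"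
| "col G (Psi v) u = (Amat G u v \<noteq> (u = v))"

definition sums_zero :: "'a lgraph \<Rightarrow> 'a elt set \<Rightarrow> bool" where
  "sums_zero G T \<longleftrightarrow> (\<forall>u \<in> verts G. even (card {x \<in> T. col G x u}))"

definition dependent_iso :: "'a lgraph \<Rightarrow> 'a elt set \<Rightarrow> bool" where
  "dependent_iso G T \<longleftrightarrow> (\<exists>T' \<subseteq> T. T' \<noteq> {} \<and> sums_zero G T')"

definition circuit_iso :: "'a lgraph \<Rightarrow> 'a elt set \<Rightarrow> bool" where
  "circuit_iso G C \<longleftrightarrow> C \<subseteq> W G \<and> dependent_iso G C \<and> (\<forall>D. D \<subset> C \<longrightarrow> \<not> dependent_iso G D)"

definition subtransversal :: "'a lgraph \<Rightarrow> 'a elt set \<Rightarrow> bool" where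
  "subtransversal G S \<longleftrightarrow> S \<subseteq> W G \<and> (\<forall>v \<in> verts G. card (S \<inter> vertex_triple G v) \<le> 1)"

definition transverse_circuit :: "'a lgraph \<Rightarrow> 'a elt set \<Rightarrow> bool" where
  "transverse_circuit G S \<longleftrightarrow> circuit_iso G S \<and> subtransversal G S"

definition zeta :: "'a lgraph \<Rightarrow> 'a \<Rightarrow> 'a elt set" where
  "zeta G v = insert (if v \<in> loops G then Psi v else Chi v) (Phi ` nbr G v)"

definition loc_l :: "'a \<Rightarrow> 'a lgraph \<Rightarrow> 'a lgraph" where
  "loc_l v G = G\<lparr>loops := (if v \<in> loops G then loops G - {v} else insert v (loops G))\<rparr>"

definition loc_s :: "'a \<Rightarrow> 'a lgraph \<Rightarrow> 'a lgraph" where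
  "loc_s v G = G\<lparr>adj := (\<lambda>x y. if x \<in> nbr G v \<and> y \<in> nbr G v \<and> x \<noteq> y
                                   then \<not> adj G x y else adj G x y)\<rparr>"

definition loc_ns :: "'a \<Rightarrow> 'a lgraph \<Rightarrow> 'a lgraph" where
  "loc_ns v G = (loc_s v G)\<lparr>loops := (loops G - nbr G v) \<union> (nbr G v - loops G)\<rparr>"

definition swap_elt :: "'a elt \<Rightarrow> 'a elt \<Rightarrow> 'a elt \<Rightarrow> 'a elt" where
  "swap_elt a b x = (if x = a then b else if x = b then a else x)"

(* induced isomorphisms of the single operations (G is the graph before the operation) *)
definition map_l :: "'a lgraph \<Rightarrow> 'a \<Rightarrow> 'a elt \<Rightarrow> 'a elt" where
  "map_l G v = swap_elt (Chi v) (Psi v)"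

definition map_ns :: "'a lgraph \<Rightarrow> 'a \<Rightarrow> 'a elt \<Rightarrow> 'a elt" where
  "map_ns G v = (if v \<in> loops G then swap_elt (Phi v) (Chi v) else swap_elt (Phi v) (Psi v))"

fun swap_chi_psi_on :: "'a set \<Rightarrow> 'a elt \<Rightarrow> 'a elt" where
  "swap_chi_psi_on N (Chi w) = (if w \<in> N then Psi w else Chi w)"
| "swap_chi_psi_on N (Psi w) = (if w \<in> N then Chi w else Psi w)"
| "swap_chi_psi_on N (Phi w) = Phi w"

definition map_s :: "'a lgraph \<Rightarrow> 'a \<Rightarrow> 'a elt \<Rightarrow> 'a elt" where
  "map_s G v = map_ns G v \<circ> swap_chi_psi_on (nbr G v)"

definition local_step :: "'a lgraph \<Rightarrow> 'a lgraph \<Rightarrow> bool" where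
  "local_step G G' \<longleftrightarrow> (\<exists>v \<in> verts G. G' = loc_l v G \<or> G' = loc_s v G \<or> G' = loc_ns v G)"

definition locally_equivalent :: "'a lgraph \<Rightarrow> 'a lgraph \<Rightarrow> bool" where
  "locally_equivalent G H \<longleftrightarrow> local_step\<^sup>*\<^sup>* G H"

inductive induced_iso :: "'a lgraph \<Rightarrow> 'a lgraph \<Rightarrow> ('a elt \<Rightarrow> 'a elt) \<Rightarrow> bool"
  for G :: "'a lgraph" where
  refl: "induced_iso G G id"
| step_l: "induced_iso G H \<beta> \<Longrightarrow> v \<in> verts H \<Longrightarrow> induced_iso G (loc_l v H) (map_l H v \<circ> \<beta>)"
| step_s: "induced_iso G H \<beta> \<Longrightarrow> v \<in> verts H \<Longrightarrow> induced_iso G (loc_s v H) (map_s H v \<circ> \<beta>)"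
| step_ns: "induced_iso G H \<beta> \<Longrightarrow> v \<in> verts H \<Longrightarrow> induced_iso G (loc_ns v H) (map_ns H v \<circ> \<beta>)"

end

theory Submission
  imports Defs
begin

text \<open>Each local operation at v changes IAS(G) by adding the row of v to the rows of the
  neighbours of v, up to a relabelling of columns that fixes the vertex of each label. So induced
  isomorphisms preserve which sets of columns sum to zero, and hence preserve circuits; as
  \<open>\<zeta>\<^sub>H(v)\<close> is a circuit of \<open>M[IAS(H)]\<close>, this gives one direction.

  Conversely, induct on the number of non-\<open>\<phi>\<close> elements of a transverse circuit S, of which
  there is at least one since the \<open>\<phi>\<close>-columns are unit vectors. Call \<open>\<chi>(x)\<close> for unlooped x and
  \<open>\<psi>(x)\<close> for looped x the head of \<open>\<zeta>(x)\<close>. A non-\<open>\<phi>\<close> element of S at x that is not the head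
  is turned into \<open>\<phi>(x)\<close> by the non-simple local complementation at x. Otherwise let s \<in> S be the
  head at x. If \<open>\<phi>(w) \<in> S\<close> for all neighbours w of x then \<open>\<zeta>(x) \<subseteq> S\<close>, so \<open>\<zeta>(x) = S\<close> by
  minimality; if \<open>\<phi>(w) \<notin> S\<close> for a neighbour w, the non-simple local complementation at w fixes S
  and toggles the loop at x, so that s is no longer a head.\<close>

lemma W_eq: "W G = {x. vtx x \<in> verts G}"
proof (rule set_eqI)
  show "x \<in> W G \<longleftrightarrow> x \<in> {x. vtx x \<in> verts G}" for x
    unfolding W_def by (cases x) auto
qed

lemma vertex_triple_eq: "vertex_triple G v = {x. vtx x = v}"
proof (rule set_eqI)
  show "x \<in> vertex_triple G v \<longleftrightarrow> x \<in> {x. vtx x = v}" for x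
    unfolding vertex_triple_def by (cases x) auto
qed

lemma finite_W: "finite (verts G) \<Longrightarrow> finite (W G)"
  unfolding W_def by simp

lemma finite_verts: "looped_simple_graph G \<Longrightarrow> finite (verts G)"
  unfolding looped_simple_graph_def by simp

lemma finite_subset_W: "looped_simple_graph G \<Longrightarrow> T \<subseteq> W G \<Longrightarrow> finite T"
  using finite_subset finite_W finite_verts by blast

lemma subtransversal_iff_inj_on: "subtransversal G S \<longleftrightarrow> S \<subseteq> W G \<and> inj_on vtx S"
proof -
  have "card (S \<inter> vertex_triple G v) \<le> 1 \<longleftrightarrow> (\<forall>s\<in>S. \<forall>t\<in>S. vtx s = v \<longrightarrow> vtx t = v \<longrightarrow> s = t)" for v
  proof -
    have "finite (S \<inter> vertex_triple G v)"
      by (simp add: vertex_triple_def)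
    then show ?thesis
      by (simp add: card_le_Suc0_iff_eq vertex_triple_eq) blast
  qed
  then show ?thesis
    unfolding subtransversal_def inj_on_def W_eq by blast
qed

lemma nbr_not_self: "v \<notin> nbr G v"
  unfolding nbr_def by simp

lemma nbr_sym: "looped_simple_graph G \<Longrightarrow> u \<in> nbr G w \<longleftrightarrow> w \<in> nbr G u"
  unfolding looped_simple_graph_def nbr_def by auto

lemma Amat_eq_nbr:
  "looped_simple_graph G \<Longrightarrow> Amat G u w \<longleftrightarrow> (if u = w then u \<in> loops G else u \<in> nbr G w)"
  unfolding Amat_def looped_simple_graph_def nbr_def by auto

section \<open>Row operations\<close>

lemma odd_card_filter_xor:
  "finite T \<Longrightarrow> odd (card {x\<in>T. P x \<noteq> Q x}) \<longleftrightarrow> odd (card {x\<in>T. P x}) \<noteq> odd (card {x\<in>T. Q x})"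
proof (induction T rule: finite_induct)
  case (insert a F)
  have "{x \<in> insert a F. R x} = (if R a then insert a {x\<in>F. R x} else {x\<in>F. R x})" for R
    by auto
  then show ?case using insert by (cases "P a"; cases "Q a") auto
qed simp

text \<open>Row v is the same for both families since v \<notin> N; once it has even parity, every other
  row has the same parity in both families.\<close>
lemma sums_zero_image_row_op:
  assumes "verts G' = verts G" "v \<in> verts G" "v \<notin> N" "inj \<beta>" "finite T"
    and col: "\<And>x u. col G' (\<beta> x) u \<longleftrightarrow> col G x u \<noteq> (u \<in> N \<and> col G x v)"
  shows "sums_zero G' (\<beta> ` T) \<longleftrightarrow> sums_zero G T"
proof -
  have "card {y \<in> \<beta> ` T. col G' y u} = card {x\<in>T. col G x u \<noteq> (u \<in> N \<and> col G x v)}" for u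
  proof -
    have "{y \<in> \<beta> ` T. col G' y u} = \<beta> ` {x\<in>T. col G x u \<noteq> (u \<in> N \<and> col G x v)}"
      using col by auto
    then show ?thesis
      using \<open>inj \<beta>\<close> by (simp add: card_image inj_on_subset)
  qed
  then have row: "odd (card {y \<in> \<beta> ` T. col G' y u}) \<longleftrightarrow>
      odd (card {x\<in>T. col G x u}) \<noteq> (u \<in> N \<and> odd (card {x\<in>T. col G x v}))" for u
    using odd_card_filter_xor[OF \<open>finite T\<close>] by (cases "u \<in> N") auto
  show ?thesis
    unfolding sums_zero_def \<open>verts G' = verts G\<close>
  proof
    assume "\<forall>u\<in>verts G. even (card {y \<in> \<beta> ` T. col G' y u})"
    moreover from this have "even (card {x\<in>T. col G x v})"
      using row[of v] \<open>v \<in> verts G\<close> \<open>v \<notin> N\<close> by simp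
    ultimately show "\<forall>u\<in>verts G. even (card {x\<in>T. col G x u})"
      using row by auto
  qed (use row \<open>v \<in> verts G\<close> in auto)
qed

section \<open>The local operations\<close>

lemma verts_loc [simp]:
  "verts (loc_l v G) = verts G" "verts (loc_s v G) = verts G" "verts (loc_ns v G) = verts G"
  by (simp_all add: loc_l_def loc_s_def loc_ns_def)

lemma looped_simple_graph_loc_l:
  "looped_simple_graph G \<Longrightarrow> v \<in> verts G \<Longrightarrow> looped_simple_graph (loc_l v G)"
  unfolding looped_simple_graph_def loc_l_def by auto

lemma adj_loc_s:
  "adj (loc_s v G) x y \<longleftrightarrow> adj G x y \<noteq> (x \<in> nbr G v \<and> y \<in> nbr G v \<and> x \<noteq> y)"
  unfolding loc_s_def by auto

lemma looped_simple_graph_loc_s: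
  assumes "looped_simple_graph G"
  shows "looped_simple_graph (loc_s v G)"
proof -
  have "x \<in> verts G \<and> y \<in> verts G \<and> x \<noteq> y \<and> adj (loc_s v G) y x"
    if "adj (loc_s v G) x y" for x y
  proof -
    have "adj G y x \<longleftrightarrow> adj G x y" "adj G x y \<longrightarrow> x \<in> verts G \<and> y \<in> verts G \<and> x \<noteq> y"
      using assms unfolding looped_simple_graph_def by blast+
    then show ?thesis
      using that unfolding adj_loc_s nbr_def by blast
  qed
  moreover have "loops (loc_s v G) = loops G"
    by (simp add: loc_s_def)
  ultimately show ?thesis
    using assms unfolding looped_simple_graph_def by simp
qed

lemma looped_simple_graph_loc_ns:
  assumes "looped_simple_graph G"
  shows "looped_simple_graph (loc_ns v G)"
proof -
  have "loops (loc_ns v G) \<subseteq> verts G"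
    using assms unfolding looped_simple_graph_def loc_ns_def nbr_def by auto
  moreover have "adj (loc_ns v G) = adj (loc_s v G)"
    by (simp add: loc_ns_def)
  ultimately show ?thesis
    using looped_simple_graph_loc_s[OF assms, of v] unfolding looped_simple_graph_def by simp
qed

lemma col_loc_l: "col (loc_l v G) (map_l G v x) u = col G x u"
  by (cases x) (auto simp: map_l_def swap_elt_def Amat_def loc_l_def)

lemma col_loc_ns:
  assumes "looped_simple_graph G"
  shows "col (loc_ns v G) (map_ns G v x) u \<longleftrightarrow> col G x u \<noteq> (u \<in> nbr G v \<and> col G x v)"
proof -
  have "Amat (loc_ns v G) u w \<longleftrightarrow> Amat G u w \<noteq> (u \<in> nbr G v \<and> w \<in> nbr G v)" for u w
    unfolding Amat_def loc_ns_def loc_s_def by auto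
  then show ?thesis
    using nbr_sym[OF assms] nbr_not_self[of v G]
    by (cases x; cases "v \<in> loops G") (auto simp: map_ns_def swap_elt_def Amat_eq_nbr[OF assms])
qed

lemma col_loc_s:
  assumes "looped_simple_graph G"
  shows "col (loc_s v G) (map_s G v x) u \<longleftrightarrow> col G x u \<noteq> (u \<in> nbr G v \<and> col G x v)"
proof -
  have "Amat (loc_s v G) u w \<longleftrightarrow> Amat G u w \<noteq> (u \<in> nbr G v \<and> w \<in> nbr G v \<and> u \<noteq> w)" for u w
    unfolding Amat_def loc_s_def by auto
  then show ?thesis
    using nbr_sym[OF assms] nbr_not_self[of v G]
    by (cases x; cases "v \<in> loops G")
      (auto simp: map_s_def map_ns_def swap_elt_def Amat_eq_nbr[OF assms])
qed

section \<open>Induced isomorphisms\<close>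

lemma inj_swap_elt: "inj (swap_elt a b)"
  unfolding inj_def swap_elt_def by auto

lemma inj_swap_chi_psi_on: "inj (swap_chi_psi_on N)"
proof (rule injI)
  fix x y
  show "swap_chi_psi_on N x = swap_chi_psi_on N y \<Longrightarrow> x = y"
    by (cases x; cases y) (auto split: if_splits)
qed

lemma inj_map_l: "inj (map_l G v)"
  by (simp add: map_l_def inj_swap_elt)

lemma inj_map_ns: "inj (map_ns G v)"
  by (simp add: map_ns_def inj_swap_elt)

lemma inj_map_s: "inj (map_s G v)"
  by (simp add: map_s_def inj_map_ns inj_swap_chi_psi_on inj_compose)

lemma vtx_map_l: "vtx (map_l G v x) = vtx x"
  by (cases x) (auto simp: map_l_def swap_elt_def)

lemma vtx_map_ns: "vtx (map_ns G v x) = vtx x"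
  by (cases x) (auto simp: map_ns_def swap_elt_def)

lemma vtx_map_s: "vtx (map_s G v x) = vtx x"
  by (cases x) (auto simp: map_s_def map_ns_def swap_elt_def)

definition zero_sum_iso :: "'a lgraph \<Rightarrow> 'a lgraph \<Rightarrow> ('a elt \<Rightarrow> 'a elt) \<Rightarrow> bool" where
  "zero_sum_iso G G' \<beta> \<longleftrightarrow> verts G' = verts G \<and> inj \<beta> \<and> (\<forall>x. vtx (\<beta> x) = vtx x) \<and>
     (\<forall>T \<subseteq> W G. sums_zero G' (\<beta> ` T) \<longleftrightarrow> sums_zero G T)"

lemma zero_sum_iso_row_op:
  assumes "verts G' = verts G" "finite (verts G)" "v \<in> verts G" "v \<notin> N" "inj \<beta>"
    and "\<And>x. vtx (\<beta> x) = vtx x"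
    and "\<And>x u. col G' (\<beta> x) u \<longleftrightarrow> col G x u \<noteq> (u \<in> N \<and> col G x v)"
  shows "zero_sum_iso G G' \<beta>"
proof -
  have "finite T" if "T \<subseteq> W G" for T
    using finite_subset[OF that finite_W[OF assms(2)]] .
  then show ?thesis
    unfolding zero_sum_iso_def using sums_zero_image_row_op[OF assms(1,3-5)] assms(1,5-7) by blast
qed

lemma zero_sum_iso_loc_l:
  "looped_simple_graph G \<Longrightarrow> v \<in> verts G \<Longrightarrow> zero_sum_iso G (loc_l v G) (map_l G v)"
  by (rule zero_sum_iso_row_op[where N = "{}"]) (simp_all add: finite_verts inj_map_l vtx_map_l col_loc_l)

lemma zero_sum_iso_loc_ns:
  "looped_simple_graph G \<Longrightarrow> v \<in> verts G \<Longrightarrow> zero_sum_iso G (loc_ns v G) (map_ns G v)"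
  by (rule zero_sum_iso_row_op[where N = "nbr G v"])
    (simp_all add: finite_verts nbr_not_self inj_map_ns vtx_map_ns col_loc_ns)

lemma zero_sum_iso_loc_s:
  "looped_simple_graph G \<Longrightarrow> v \<in> verts G \<Longrightarrow> zero_sum_iso G (loc_s v G) (map_s G v)"
  by (rule zero_sum_iso_row_op[where N = "nbr G v"])
    (simp_all add: finite_verts nbr_not_self inj_map_s vtx_map_s col_loc_s)

lemma zero_sum_iso_W: "zero_sum_iso G G' \<beta> \<Longrightarrow> T \<subseteq> W G \<Longrightarrow> \<beta> ` T \<subseteq> W G'"
  unfolding zero_sum_iso_def W_eq by auto

lemma zero_sum_iso_comp:
  assumes "zero_sum_iso G H \<beta>" "zero_sum_iso H H' \<gamma>"
  shows "zero_sum_iso G H' (\<gamma> \<circ> \<beta>)"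
proof -
  have "sums_zero H' (\<gamma> ` \<beta> ` T) \<longleftrightarrow> sums_zero H (\<beta> ` T)" if "T \<subseteq> W G" for T
    using assms(2) zero_sum_iso_W[OF assms(1) that] unfolding zero_sum_iso_def by blast
  also have "\<dots> T \<longleftrightarrow> sums_zero G T" if "T \<subseteq> W G" for T
    using assms(1) that unfolding zero_sum_iso_def by blast
  finally show ?thesis
    using assms unfolding zero_sum_iso_def by (simp add: inj_compose image_comp)
qed

lemma induced_iso_zero_sum_iso:
  "induced_iso G H \<beta> \<Longrightarrow> looped_simple_graph G \<Longrightarrow> looped_simple_graph H \<and> zero_sum_iso G H \<beta>"
proof (induction rule: induced_iso.induct)
  case refl
  then show ?case by (simp add: zero_sum_iso_def)
next
  case (step_l H \<beta> v)
  then show ?case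
    by (metis looped_simple_graph_loc_l zero_sum_iso_comp zero_sum_iso_loc_l)
next
  case (step_s H \<beta> v)
  then show ?case
    by (metis looped_simple_graph_loc_s zero_sum_iso_comp zero_sum_iso_loc_s)
next
  case (step_ns H \<beta> v)
  then show ?case
    by (metis looped_simple_graph_loc_ns zero_sum_iso_comp zero_sum_iso_loc_ns)
qed

lemma induced_iso_locally_equivalent: "induced_iso G H \<beta> \<Longrightarrow> locally_equivalent G H"
  unfolding locally_equivalent_def
proof (induction rule: induced_iso.induct)
  case (step_l H \<beta> v)
  then show ?case by (auto simp: local_step_def intro: rtranclp.rtrancl_into_rtrancl)
next
  case (step_s H \<beta> v)
  then show ?case by (auto simp: local_step_def intro: rtranclp.rtrancl_into_rtrancl)
next
  case (step_ns H \<beta> v)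
  then show ?case by (auto simp: local_step_def intro: rtranclp.rtrancl_into_rtrancl)
qed simp

lemma induced_iso_trans:
  "induced_iso G' H \<beta> \<Longrightarrow> induced_iso G G' \<gamma> \<Longrightarrow> induced_iso G H (\<beta> \<circ> \<gamma>)"
  by (induction rule: induced_iso.induct) (auto simp: comp_assoc intro: induced_iso.intros)

lemma dependent_iso_image:
  assumes "zero_sum_iso G G' \<beta>" "D \<subseteq> W G"
  shows "dependent_iso G' (\<beta> ` D) \<longleftrightarrow> dependent_iso G D"
proof -
  have "sums_zero G' (\<beta> ` T) \<longleftrightarrow> sums_zero G T" if "T \<subseteq> D" for T
    using assms that unfolding zero_sum_iso_def by blast
  then show ?thesis
    unfolding dependent_iso_def subset_image_iff by blast
qed

lemma circuit_iso_image:
  assumes "zero_sum_iso G G' \<beta>" "C \<subseteq> W G"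
  shows "circuit_iso G' (\<beta> ` C) \<longleftrightarrow> circuit_iso G C"
proof -
  have "inj \<beta>"
    using assms(1) unfolding zero_sum_iso_def by blast
  then have psubset: "D' \<subset> \<beta> ` C \<longleftrightarrow> (\<exists>D \<subset> C. D' = \<beta> ` D)" for D'
    unfolding psubset_eq subset_image_iff using inj_image_eq_iff by blast
  have "(\<forall>D'. D' \<subset> \<beta> ` C \<longrightarrow> \<not> dependent_iso G' D') \<longleftrightarrow> (\<forall>D. D \<subset> C \<longrightarrow> \<not> dependent_iso G D)"
    unfolding psubset using dependent_iso_image[OF assms(1)] assms(2) by blast
  then show ?thesis
    unfolding circuit_iso_def
    using dependent_iso_image[OF assms] zero_sum_iso_W[OF assms] assms(2) by blast
qed

lemma subtransversal_image:
  assumes "zero_sum_iso G G' \<beta>" "subtransversal G S"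
  shows "subtransversal G' (\<beta> ` S)"
proof -
  have vtx: "\<And>x. vtx (\<beta> x) = vtx x" and "inj \<beta>"
    using assms(1) unfolding zero_sum_iso_def by blast+
  have "S \<subseteq> W G" "inj_on vtx S"
    using assms(2) unfolding subtransversal_iff_inj_on by blast+
  then have "\<beta> ` S \<subseteq> W G'" "inj_on vtx (\<beta> ` S)"
    using zero_sum_iso_W[OF assms(1)] vtx by (auto simp: inj_on_def)
  then show ?thesis
    unfolding subtransversal_iff_inj_on by blast
qed

lemma transverse_circuit_image:
  assumes "zero_sum_iso G G' \<beta>" "transverse_circuit G S"
  shows "transverse_circuit G' (\<beta> ` S)"
proof -
  have "circuit_iso G S" "subtransversal G S" "S \<subseteq> W G"
    using assms(2) unfolding transverse_circuit_def subtransversal_def by blast+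
  then show ?thesis
    unfolding transverse_circuit_def
    using circuit_iso_image[OF assms(1)] subtransversal_image[OF assms(1)] by blast
qed

section \<open>Neighbourhood circuits\<close>

lemma circuit_iso_sums_zero:
  assumes "circuit_iso G C"
  shows "sums_zero G C" "C \<noteq> {}"
proof -
  obtain T where T: "T \<subseteq> C" "T \<noteq> {}" "sums_zero G T"
    using assms unfolding circuit_iso_def dependent_iso_def by blast
  then have "dependent_iso G T"
    unfolding dependent_iso_def by blast
  then have "T = C"
    using assms T(1) unfolding circuit_iso_def by blast
  with T show "sums_zero G C" "C \<noteq> {}" by simp_all
qed

lemma circuit_iso_subset_eq: "circuit_iso G D \<Longrightarrow> circuit_iso G C \<Longrightarrow> D \<subseteq> C \<Longrightarrow> D = C"
  unfolding circuit_iso_def by blast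

lemma sums_zero_row_not_singleton:
  assumes "sums_zero G T" "u \<in> verts G"
  shows "{x \<in> T. col G x u} \<noteq> {a}"
proof
  assume "{x \<in> T. col G x u} = {a}"
  moreover have "even (card {x \<in> T. col G x u})"
    using assms unfolding sums_zero_def by blast
  ultimately show False
    by simp
qed

lemma circuit_iso_not_subset_Phi:
  assumes "circuit_iso G C"
  shows "\<not> C \<subseteq> range Phi"
proof
  assume Phi: "C \<subseteq> range Phi"
  obtain u where u: "Phi u \<in> C"
    using circuit_iso_sums_zero(2)[OF assms] Phi by auto
  moreover have "C \<subseteq> W G"
    using assms unfolding circuit_iso_def by blast
  ultimately have "u \<in> verts G"
    unfolding W_eq by auto
  have "{x \<in> C. col G x u} = {Phi u}"
  proof (rule set_eqI)
    fix x
    show "x \<in> {x \<in> C. col G x u} \<longleftrightarrow> x \<in> {Phi u}"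
      using u Phi by (cases x) auto
  qed
  then show False
    using sums_zero_row_not_singleton[OF circuit_iso_sums_zero(1)[OF assms] \<open>u \<in> verts G\<close>] by blast
qed

definition zeta_head :: "'a lgraph \<Rightarrow> 'a \<Rightarrow> 'a elt" where
  "zeta_head G v = (if v \<in> loops G then Psi v else Chi v)"

lemma zeta_eq_head: "zeta G v = insert (zeta_head G v) (Phi ` nbr G v)"
  unfolding zeta_def zeta_head_def by simp

lemma zeta_head_ne_Phi: "zeta_head G v \<noteq> Phi u"
  unfolding zeta_head_def by simp

lemma vtx_zeta_head: "vtx (zeta_head G v) = v"
  unfolding zeta_head_def by simp

lemma zeta_head_not_Phi: "zeta_head G v \<notin> range Phi"
  unfolding zeta_head_def by auto

lemma col_zeta_head: "looped_simple_graph G \<Longrightarrow> col G (zeta_head G v) u \<longleftrightarrow> u \<in> nbr G v"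
  unfolding zeta_head_def using nbr_not_self[of v G] by (auto simp: Amat_eq_nbr)

lemma sums_zero_subset_zeta:
  assumes G: "looped_simple_graph G" and T: "T \<subseteq> zeta G v" "T \<noteq> {}" "sums_zero G T"
  shows "T = zeta G v"
proof -
  have nbr_verts: "nbr G v \<subseteq> verts G"
    unfolding nbr_def by blast
  have head: "zeta_head G v \<in> T"
  proof (rule ccontr)
    assume "zeta_head G v \<notin> T"
    then have Phi: "T \<subseteq> Phi ` nbr G v"
      using T(1) unfolding zeta_eq_head by blast
    then obtain u where u: "u \<in> nbr G v" "Phi u \<in> T"
      using T(2) by blast
    then have "{x \<in> T. col G x u} = {Phi u}"
      using Phi by auto
    then show False
      using sums_zero_row_not_singleton[OF T(3)] u nbr_verts by blast
  qed
  have "Phi w \<in> T" if w: "w \<in> nbr G v" for w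
  proof (rule ccontr)
    assume "Phi w \<notin> T"
    then have "{x \<in> T. col G x w} = {zeta_head G v}"
      using T(1) head w col_zeta_head[OF G] unfolding zeta_eq_head by auto
    then show False
      using sums_zero_row_not_singleton[OF T(3)] w nbr_verts by blast
  qed
  then show ?thesis
    using T(1) head unfolding zeta_eq_head by blast
qed

lemma circuit_iso_zeta:
  assumes "looped_simple_graph G" "v \<in> verts G"
  shows "circuit_iso G (zeta G v)"
proof -
  have "{t \<in> zeta G v. col G t u} = (if u \<in> nbr G v then {zeta_head G v, Phi u} else {})" for u
    unfolding zeta_eq_head using col_zeta_head[OF assms(1)] by auto
  then have sums: "sums_zero G (zeta G v)"
    unfolding sums_zero_def by (simp add: zeta_head_ne_Phi)
  then have "dependent_iso G (zeta G v)"
    unfolding dependent_iso_def zeta_def by blast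
  moreover have "\<not> dependent_iso G D" if "D \<subset> zeta G v" for D
    using sums_zero_subset_zeta[OF assms(1)] that unfolding dependent_iso_def by blast
  moreover have "zeta G v \<subseteq> W G"
    using assms(2) unfolding zeta_eq_head zeta_head_def W_eq nbr_def by auto
  ultimately show ?thesis
    unfolding circuit_iso_def by blast
qed

section \<open>Reduction to a neighbourhood circuit\<close>

lemma map_ns_other_vertex: "vtx t \<noteq> v \<Longrightarrow> map_ns G v t = t"
  by (cases t) (auto simp: map_ns_def swap_elt_def)

lemma map_ns_zeta_head: "map_ns G v (zeta_head G v) = zeta_head G v"
  by (simp add: map_ns_def swap_elt_def zeta_head_def)

lemma map_ns_not_zeta_head:
  "s \<notin> range Phi \<Longrightarrow> s \<noteq> zeta_head G (vtx s) \<Longrightarrow> map_ns G (vtx s) s = Phi (vtx s)"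
  by (cases s) (auto simp: map_ns_def swap_elt_def zeta_head_def)

lemma zeta_head_loc_ns: "x \<in> nbr G w \<Longrightarrow> zeta_head (loc_ns w G) x \<noteq> zeta_head G x"
  by (simp add: zeta_head_def loc_ns_def)

lemma card_map_ns_not_Phi_less:
  assumes "finite S" "inj_on vtx S" "s \<in> S" "s \<notin> range Phi" "s \<noteq> zeta_head G (vtx s)"
  shows "card (map_ns G (vtx s) ` S - range Phi) < card (S - range Phi)"
proof -
  have "map_ns G (vtx s) ` S - range Phi \<subseteq> S - range Phi - {s}"
  proof
    fix y
    assume "y \<in> map_ns G (vtx s) ` S - range Phi"
    then obtain t where t: "t \<in> S" "y = map_ns G (vtx s) t" "y \<notin> range Phi"
      by blast
    then have "t \<noteq> s"
      using map_ns_not_zeta_head[OF assms(4,5)] by auto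
    then have "vtx t \<noteq> vtx s"
      using assms(2,3) t(1) unfolding inj_on_def by blast
    then have "y = t"
      using t(2) map_ns_other_vertex by metis
    then show "y \<in> S - range Phi - {s}"
      using t \<open>t \<noteq> s\<close> by simp
  qed
  then have "card (map_ns G (vtx s) ` S - range Phi) \<le> card (S - range Phi - {s})"
    using assms(1) by (simp add: card_mono)
  also have "\<dots> < card (S - range Phi)"
    using assms(1,3,4) by (intro card_Diff1_less) auto
  finally show ?thesis .
qed

definition maps_to_zeta :: "'a lgraph \<Rightarrow> 'a elt set \<Rightarrow> bool" where
  "maps_to_zeta G S \<longleftrightarrow>
     (\<exists>H \<beta> v. looped_simple_graph H \<and> induced_iso G H \<beta> \<and> v \<in> verts H \<and> \<beta> ` S = zeta H v)"

lemma maps_to_zeta_loc_ns: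
  assumes "v \<in> verts G" "maps_to_zeta (loc_ns v G) (map_ns G v ` S)"
  shows "maps_to_zeta G S"
proof -
  obtain H \<beta> u where H: "looped_simple_graph H" "induced_iso (loc_ns v G) H \<beta>" "u \<in> verts H"
      "\<beta> ` map_ns G v ` S = zeta H u"
    using assms(2) unfolding maps_to_zeta_def by blast
  have "induced_iso G (loc_ns v G) (map_ns G v \<circ> id)"
    by (rule induced_iso.step_ns[OF induced_iso.refl assms(1)])
  then have "induced_iso G H (\<beta> \<circ> map_ns G v)"
    using induced_iso_trans[OF H(2)] by simp
  then show ?thesis
    unfolding maps_to_zeta_def using H(1,3,4) by (metis image_comp)
qed

lemma transverse_circuit_loc_ns_non_head:
  assumes G: "looped_simple_graph G" and tc: "transverse_circuit G S"
    and s: "s \<in> S" "s \<notin> range Phi" "s \<noteq> zeta_head G (vtx s)"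
  shows "vtx s \<in> verts G"
    and "transverse_circuit (loc_ns (vtx s) G) (map_ns G (vtx s) ` S)"
    and "card (map_ns G (vtx s) ` S - range Phi) < card (S - range Phi)"
proof -
  have "S \<subseteq> W G" "inj_on vtx S"
    using tc unfolding transverse_circuit_def subtransversal_iff_inj_on by blast+
  then show v: "vtx s \<in> verts G"
    using s(1) unfolding W_eq by blast
  show "card (map_ns G (vtx s) ` S - range Phi) < card (S - range Phi)"
    using card_map_ns_not_Phi_less[OF finite_subset_W[OF G \<open>S \<subseteq> W G\<close>] \<open>inj_on vtx S\<close> s] .
  show "transverse_circuit (loc_ns (vtx s) G) (map_ns G (vtx s) ` S)"
    using transverse_circuit_image[OF zero_sum_iso_loc_ns[OF G v] tc] .
qed

lemma map_ns_image_eq_self: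
  assumes "\<And>t. t \<in> S \<Longrightarrow> t \<notin> range Phi \<Longrightarrow> t = zeta_head G (vtx t)" "Phi w \<notin> S"
  shows "map_ns G w ` S = S"
proof -
  have "map_ns G w t = t" if "t \<in> S" for t
  proof (cases "vtx t = w")
    case True
    then have "t \<notin> range Phi"
      using that assms(2) by auto
    then show ?thesis
      using assms(1)[OF that] True map_ns_zeta_head by metis
  qed (rule map_ns_other_vertex)
  then show ?thesis
    by simp
qed

lemma circuit_iso_obtain_head:
  assumes "circuit_iso G S"
    and heads: "\<And>t. t \<in> S \<Longrightarrow> t \<notin> range Phi \<Longrightarrow> t = zeta_head G (vtx t)"
  obtains x where "x \<in> verts G" "zeta_head G x \<in> S"
proof -
  have "S \<subseteq> W G"
    using assms(1) unfolding circuit_iso_def by blast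
  then obtain s where "s \<in> S" "s \<notin> range Phi" "vtx s \<in> verts G"
    using circuit_iso_not_subset_Phi[OF assms(1)] unfolding W_eq by blast
  then show ?thesis
    using that heads by metis
qed

lemma circuit_iso_eq_zeta:
  assumes "looped_simple_graph G" "x \<in> verts G" "circuit_iso G C"
    and "zeta_head G x \<in> C" "Phi ` nbr G x \<subseteq> C"
  shows "C = zeta G x"
  using circuit_iso_subset_eq[OF circuit_iso_zeta[OF assms(1,2)] assms(3)] assms(4,5)
  unfolding zeta_eq_head by simp

lemma transverse_circuit_loc_ns_neighbour:
  assumes G: "looped_simple_graph G" and tc: "transverse_circuit G S"
    and heads: "\<And>t. t \<in> S \<Longrightarrow> t \<notin> range Phi \<Longrightarrow> t = zeta_head G (vtx t)"
    and w: "w \<in> nbr G x" "Phi w \<notin> S"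
  shows "w \<in> verts G" and "map_ns G w ` S = S" and "transverse_circuit (loc_ns w G) S"
    and "zeta_head G x \<noteq> zeta_head (loc_ns w G) x"
proof -
  show wv: "w \<in> verts G"
    using w(1) unfolding nbr_def by blast
  show fixed: "map_ns G w ` S = S"
    using map_ns_image_eq_self[OF heads w(2)] .
  show "transverse_circuit (loc_ns w G) S"
    using transverse_circuit_image[OF zero_sum_iso_loc_ns[OF G wv] tc] fixed by simp
  show "zeta_head G x \<noteq> zeta_head (loc_ns w G) x"
    using zeta_head_loc_ns nbr_sym[OF G] w(1) by metis
qed

lemma transverse_circuit_maps_to_zeta:
  "looped_simple_graph G \<Longrightarrow> transverse_circuit G S \<Longrightarrow> maps_to_zeta G S"
proof (induction "card (S - range Phi)" arbitrary: G S rule: less_induct)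
  case less
  have reduce: "maps_to_zeta G' S"
    if "looped_simple_graph G'" "transverse_circuit G' S"
      "s \<in> S" "s \<notin> range Phi" "s \<noteq> zeta_head G' (vtx s)" for G' s
  proof -
    note non_head = transverse_circuit_loc_ns_non_head[OF that]
    have "maps_to_zeta (loc_ns (vtx s) G') (map_ns G' (vtx s) ` S)"
      using less.hyps[OF non_head(3) looped_simple_graph_loc_ns[OF that(1)] non_head(2)] .
    then show ?thesis
      using maps_to_zeta_loc_ns[OF non_head(1)] by blast
  qed
  have G: "looped_simple_graph G" and tc: "transverse_circuit G S"
    using less.prems by blast+
  then have circuit: "circuit_iso G S"
    unfolding transverse_circuit_def by blast
  show ?case
  proof (cases "\<exists>s\<in>S. s \<notin> range Phi \<and> s \<noteq> zeta_head G (vtx s)")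
    case True
    then show ?thesis
      using reduce[OF G tc] by blast
  next
    case False
    then have heads: "t = zeta_head G (vtx t)" if "t \<in> S" "t \<notin> range Phi" for t
      using that by blast
    obtain x where x: "x \<in> verts G" "zeta_head G x \<in> S"
      using circuit_iso_obtain_head[OF circuit heads] .
    show ?thesis
    proof (cases "Phi ` nbr G x \<subseteq> S")
      case True
      then have "id ` S = zeta G x"
        using circuit_iso_eq_zeta[OF G x(1) circuit x(2)] by simp
      then show ?thesis
        unfolding maps_to_zeta_def using G x(1) induced_iso.refl by blast
    next
      case False
      then obtain w where w: "w \<in> nbr G x" "Phi w \<notin> S"
        by blast
      note neighbour = transverse_circuit_loc_ns_neighbour[OF G tc heads w]
      have "maps_to_zeta (loc_ns w G) (map_ns G w ` S)"
        using reduce[OF looped_simple_graph_loc_ns[OF G] neighbour(3) x(2) zeta_head_not_Phi]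
          neighbour(2,4) by (simp add: vtx_zeta_head)
      then show ?thesis
        using maps_to_zeta_loc_ns[OF neighbour(1)] by blast
    qed
  qed
qed

lemma maps_to_zeta_transverse_circuit:
  assumes "looped_simple_graph G" "subtransversal G S" "maps_to_zeta G S"
  shows "transverse_circuit G S"
proof -
  obtain H \<beta> v where H: "looped_simple_graph H" "induced_iso G H \<beta>" "v \<in> verts H"
      "\<beta> ` S = zeta H v"
    using assms(3) unfolding maps_to_zeta_def by blast
  have "zero_sum_iso G H \<beta>"
    using induced_iso_zero_sum_iso[OF H(2) assms(1)] by blast
  moreover have "S \<subseteq> W G"
    using assms(2) unfolding subtransversal_def by blast
  moreover have "circuit_iso H (\<beta> ` S)"
    using circuit_iso_zeta[OF H(1,3)] H(4) by simp
  ultimately have "circuit_iso G S"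
    using circuit_iso_image by blast
  then show ?thesis
    unfolding transverse_circuit_def using assms(2) by blast
qed

theorem theorem1p2:
  fixes G :: "'a lgraph" and S :: "'a elt set"
  assumes "looped_simple_graph G"
    and "subtransversal G S"
  shows "transverse_circuit G S \<longleftrightarrow>
    (\<exists>H \<beta> v. looped_simple_graph H \<and> locally_equivalent G H \<and> induced_iso G H \<beta> \<and>
             v \<in> verts H \<and> \<beta> ` S = zeta H v)"
proof
  assume "transverse_circuit G S"
  then obtain H \<beta> v where H: "looped_simple_graph H" "induced_iso G H \<beta>" "v \<in> verts H"
      "\<beta> ` S = zeta H v"
    using transverse_circuit_maps_to_zeta[OF assms(1)] unfolding maps_to_zeta_def by blast
  then show "\<exists>H \<beta> v. looped_simple_graph H \<and> locally_equivalent G H \<and> induced_iso G H \<beta> \<and>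
      v \<in> verts H \<and> \<beta> ` S = zeta H v"
    using induced_iso_locally_equivalent[OF H(2)] by blast
next
  assume "\<exists>H \<beta> v. looped_simple_graph H \<and> locally_equivalent G H \<and> induced_iso G H \<beta> \<and>
      v \<in> verts H \<and> \<beta> ` S = zeta H v"
  then have "maps_to_zeta G S"
    unfolding maps_to_zeta_def by blast
  then show "transverse_circuit G S"
    by (rule maps_to_zeta_transverse_circuit[OF assms])
qed

end
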